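(* Let $U\subseteq\mathbb{R}^n$ be open and $g:U\to\mathbb{R}^m$ a $PC^2$ mapping. Then $g$ is second-order directionally differentiable and second-order gph-regular at every $x\in U$.
   Context: A continuous $g:U\to\mathbb{R}^m$ is a continuous selection of $C^2$ mappings if there are finitely many $C^2$ mappings $g_i:U\to\mathbb{R}^m$, $i\in[l]$, such that $\{i:g(x)=g_i(x)\}$ is nonempty for every $x\in U$; $g$ is $PC^2$ if every point of $U$ has a neighborhood $V\subseteq U$ on which $g$ restricted to $V$ is such a continuous selection. $g'(x;d)=\lim_{t\downarrow0}(g(x+td)-g(x))/t$; $g$ is second-order directionally differentiable at $x$ if for all $d$, $g'(x;d)$ exists and $g''(x;d,w):=\lim_{t\downarrow0}\frac{g(x+td+\frac12t^2w)-g(x)-tg'(x;d)}{\frac12t^2}$ exists for all $w$. $g$ is second-order gph-regular at $x$ if it is locally Lipschitz continuous and second-order directionally differentiable at $x$ and for every $d$ and every path $w:\mathbb{R}_+\to\mathbb{R}^n$ with $tw(t)\to0$ as $t\downarrow0$ there is $r$ with $\|r(t)\|/t^2\to0$ as $t\downarrow0$ and $g(x+td+\frac12t^2w(t))=g(x)+tg'(x;d)+\frac12t^2g''(x;d,w(t))+r(t)$ for small $t\ge0$. *)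

theory Defs
  imports "HOL-Analysis.Analysis"
begin

definition C2_on :: "'a::euclidean_space set \<Rightarrow> ('a \<Rightarrow> 'b::euclidean_space) \<Rightarrow> bool" where
  "C2_on V f \<longleftrightarrow>
     (\<exists>f' :: 'a \<Rightarrow> ('a \<Rightarrow>\<^sub>L 'b). \<exists>f'' :: 'a \<Rightarrow> ('a \<Rightarrow>\<^sub>L ('a \<Rightarrow>\<^sub>L 'b)).
        (\<forall>x\<in>V. (f has_derivative blinfun_apply (f' x)) (at x)) \<and>
        (\<forall>x\<in>V. (f' has_derivative blinfun_apply (f'' x)) (at x)) \<and>
        continuous_on V f'')"

definition cont_selection_C2 :: "'a::euclidean_space set \<Rightarrow> ('a \<Rightarrow> 'b::euclidean_space) \<Rightarrow> bool" where
  "cont_selection_C2 V g \<longleftrightarrow> continuous_on V g \<and>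
     (\<exists>F :: ('a \<Rightarrow> 'b) set. finite F \<and> (\<forall>f\<in>F. C2_on V f) \<and> (\<forall>y\<in>V. \<exists>f\<in>F. g y = f y))"

definition PC2_on :: "'a::euclidean_space set \<Rightarrow> ('a \<Rightarrow> 'b::euclidean_space) \<Rightarrow> bool" where
  "PC2_on U g \<longleftrightarrow> (\<forall>x\<in>U. \<exists>V. open V \<and> x \<in> V \<and> V \<subseteq> U \<and> cont_selection_C2 V g)"

definition dir_deriv :: "('a::real_normed_vector \<Rightarrow> 'b::real_normed_vector) \<Rightarrow> 'a \<Rightarrow> 'a \<Rightarrow> 'b" where
  "dir_deriv g x d = Lim (at_right 0) (\<lambda>t::real. (g (x + t *\<^sub>R d) - g x) /\<^sub>R t)"

definition dir_deriv2 :: "('a::real_normed_vector \<Rightarrow> 'b::real_normed_vector) \<Rightarrow> 'a \<Rightarrow> 'a \<Rightarrow> 'a \<Rightarrow> 'b" where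
  "dir_deriv2 g x d w = Lim (at_right 0)
     (\<lambda>t::real. (g (x + t *\<^sub>R d + ((1/2) * t\<^sup>2) *\<^sub>R w) - g x - t *\<^sub>R dir_deriv g x d) /\<^sub>R ((1/2) * t\<^sup>2))"

definition so_dir_differentiable :: "('a::real_normed_vector \<Rightarrow> 'b::real_normed_vector) \<Rightarrow> 'a \<Rightarrow> bool" where
  "so_dir_differentiable g x \<longleftrightarrow>
     (\<forall>d. (\<exists>v. ((\<lambda>t::real. (g (x + t *\<^sub>R d) - g x) /\<^sub>R t) \<longlongrightarrow> v) (at_right 0)) \<and>
          (\<forall>w. \<exists>v. ((\<lambda>t::real. (g (x + t *\<^sub>R d + ((1/2) * t\<^sup>2) *\<^sub>R w) - g x - t *\<^sub>R dir_deriv g x d)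
                        /\<^sub>R ((1/2) * t\<^sup>2)) \<longlongrightarrow> v) (at_right 0)))"

definition locally_lipschitz_at :: "('a::metric_space \<Rightarrow> 'b::metric_space) \<Rightarrow> 'a \<Rightarrow> bool" where
  "locally_lipschitz_at g x \<longleftrightarrow> (\<exists>e>0. \<exists>L. L-lipschitz_on (ball x e) g)"

definition so_gph_regular :: "('a::real_normed_vector \<Rightarrow> 'b::real_normed_vector) \<Rightarrow> 'a \<Rightarrow> bool" where
  "so_gph_regular g x \<longleftrightarrow> locally_lipschitz_at g x \<and> so_dir_differentiable g x \<and>
     (\<forall>d. \<forall>w :: real \<Rightarrow> 'a. ((\<lambda>t. t *\<^sub>R w t) \<longlongrightarrow> 0) (at_right 0) \<longrightarrow>
        (\<exists>r :: real \<Rightarrow> 'b. ((\<lambda>t. norm (r t) / t\<^sup>2) \<longlongrightarrow> 0) (at_right 0) \<and>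
           (\<exists>\<delta>>0. \<forall>t. 0 \<le> t \<and> t < \<delta> \<longrightarrow>
              g (x + t *\<^sub>R d + ((1/2) * t\<^sup>2) *\<^sub>R w t) =
                g x + t *\<^sub>R dir_deriv g x d + ((1/2) * t\<^sup>2) *\<^sub>R dir_deriv2 g x d (w t) + r t)))"

end

theory Submission
  imports Defs
begin

(* Near x, g is a continuous selection of finitely many C^2 pieces, all active at x. Each piece
   is Lipschitz, hence so is g, since a continuous selection of K-Lipschitz maps on a segment is
   K-Lipschitz. Along a parabola x + s d + s^2/2 w, the first and second difference quotients of
   g are continuous in s, and by Taylor's formula for the active piece f they lie close to the
   finitely many values Df(x)d, respectively Df(x)w + D^2f(x)(d,d). A connected set within
   distance r of a finite set C has diameter at most 3^|C| r; this yields a Cauchy criterion, hence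
   the limits g'(x;d) and g''(x;d,w). For the second quotient one also needs Df(x)d = g'(x;d) for
   every piece active along the parabola, which follows by comparing with the straight line via the
   Lipschitz bound. All estimates are uniform in w as long as s w -> 0, which gives the expansion
   required for second-order gph-regularity. *)

(* If two centres are within 2r, drop one and triple the radius; otherwise the balls around the
   centres are separated and, by connectedness, T lies in a single one of them. *)
lemma connected_near_finite_dist_le:
  fixes T :: "'a::metric_space set"
  assumes "connected T" and "finite C" and "0 \<le> r"
    and "\<And>y. y \<in> T \<Longrightarrow> \<exists>c\<in>C. dist y c \<le> r"
    and "y \<in> T" and "z \<in> T"
  shows "dist y z \<le> 3 ^ card C * r"
  using assms
proof (induction "card C" arbitrary: C r)
  case 0
  then show ?case by auto
next
  case (Suc n)
  show ?case
  proof (cases "\<exists>c1\<in>C. \<exists>c2\<in>C. c1 \<noteq> c2 \<and> dist c1 c2 \<le> 2 * r")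
    case True
    then obtain c1 c2 where c: "c1 \<in> C" "c2 \<in> C" "c1 \<noteq> c2" "dist c1 c2 \<le> 2 * r"
      by blast
    have "\<exists>c\<in>C - {c2}. dist y' c \<le> 3 * r" if "y' \<in> T" for y'
    proof -
      obtain c where "c \<in> C" "dist y' c \<le> r" using Suc.prems(4) \<open>y' \<in> T\<close> by blast
      moreover have "dist y' c1 \<le> 3 * r" if "c = c2"
        using that dist_triangle[of y' c1 c2] c(4) \<open>dist y' c \<le> r\<close> by (simp add: dist_commute)
      ultimately show ?thesis using c(1,3) Suc.prems(3) by (cases "c = c2") force+
    qed
    moreover have "card (C - {c2}) = n" using Suc.hyps(2) Suc.prems(2) c(2) by simp
    ultimately have "dist y z \<le> 3 ^ n * (3 * r)"
      using Suc.hyps(1)[of "C - {c2}" "3 * r"] Suc.prems by auto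
    then show ?thesis unfolding Suc.hyps(2)[symmetric] by (simp add: ac_simps)
  next
    case False
    obtain c where c: "c \<in> C" "dist y c \<le> r" using Suc.prems(4,5) by blast
    define B where "B = (\<Union>c'\<in>C - {c}. cball c' r)"
    have "T \<subseteq> cball c r \<union> B"
      using Suc.prems(4) unfolding B_def by (fastforce simp: dist_commute)
    moreover have "cball c r \<inter> B = {}"
    proof -
      have "dist c c' \<le> 2 * r" if "y' \<in> cball c r" "y' \<in> cball c' r" for c' y'
        using that dist_triangle[of c c' y'] by (simp add: dist_commute)
      then show ?thesis using False c(1) unfolding B_def by fastforce
    qed
    moreover have "closed B" unfolding B_def using Suc.prems(2) by (intro closed_UN) auto
    moreover have "cball c r \<inter> T \<noteq> {}" using c Suc.prems(5) by (auto simp: dist_commute)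
    ultimately have "B \<inter> T = {}"
      using connected_closedD[OF Suc.prems(1), of "cball c r" B] by auto
    then have "dist c z \<le> r" using \<open>T \<subseteq> cball c r \<union> B\<close> Suc.prems(6) by auto
    then have "dist y z \<le> 2 * r" using c(2) dist_triangle[of y z c] by simp
    also have "\<dots> \<le> 3 ^ card C * r"
    proof -
      have "(2::real) \<le> 3 ^ card C"
        using Suc.hyps(2) power_increasing[of 1 "card C" "3::real"] by simp
      then show ?thesis using Suc.prems(3) by (rule mult_right_mono)
    qed
    finally show ?thesis .
  qed
qed

lemma continuous_on_near_finite_dist_le:
  fixes q :: "real \<Rightarrow> 'b::metric_space"
  assumes "continuous_on {0<..t} q" and "finite F" and "0 \<le> r"
    and "\<And>\<tau>. \<tau> \<in> {0<..t} \<Longrightarrow> \<exists>i\<in>F. dist (q \<tau>) (c i) \<le> r"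
    and "\<tau> \<in> {0<..t}"
  shows "dist (q \<tau>) (q t) \<le> 3 ^ card F * r"
proof -
  have "dist (q \<tau>) (q t) \<le> 3 ^ card (c ` F) * r"
  proof (rule connected_near_finite_dist_le)
    show "connected (q ` {0<..t})"
      using assms(1) by (rule connected_continuous_image) simp
  qed (use assms in auto)
  also have "\<dots> \<le> 3 ^ card F * r"
    using assms(2,3) by (intro mult_right_mono power_increasing card_image_le) auto
  finally show ?thesis .
qed

lemma tendsto_Lim_at_right_if_Cauchy:
  fixes q :: "real \<Rightarrow> 'b::complete_space"
  assumes "\<And>\<epsilon>. \<epsilon> > 0 \<Longrightarrow> \<forall>\<^sub>F t in at_right 0. \<forall>\<tau>\<in>{0<..t}. dist (q \<tau>) (q t) \<le> \<epsilon>"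
  shows "(q \<longlongrightarrow> Lim (at_right 0) q) (at_right 0)"
proof -
  have "cauchy_filter (filtermap q (at_right 0))"
    unfolding cauchy_filter_metric_filtermap
  proof (intro allI impI)
    fix e :: real assume "e > 0"
    then obtain b where "b > 0"
      and b: "\<And>t \<tau>. t \<in> {0<..<b} \<Longrightarrow> \<tau> \<in> {0<..t} \<Longrightarrow> dist (q \<tau>) (q t) \<le> e/3"
      using assms[of "e/3"] unfolding eventually_at_right_field by auto
    have "dist (q s) (q t) < e" if "s \<in> {0<..<b}" "t \<in> {0<..<b}" for s t
      using b[OF that(1), of t] b[OF that(2), of s] that \<open>e > 0\<close>
      by (cases "s \<le> t") (auto simp: dist_commute)
    then show "\<exists>P. eventually P (at_right 0) \<and> (\<forall>s t. P s \<and> P t \<longrightarrow> dist (q s) (q t) < e)"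
      using \<open>b > 0\<close> by (intro exI[of _ "\<lambda>s. s \<in> {0<..<b}"]) (auto simp: eventually_at_right_field)
  qed
  then obtain L where "(q \<longlongrightarrow> L) (at_right 0)"
    using cauchy_filter_complete_converges[OF _ complete_UNIV] unfolding filterlim_def by fastforce
  then show ?thesis using tendsto_Lim[of "at_right 0" q L] by simp
qed

lemma eventually_at_right_0_all_below:
  assumes "eventually P (at_right (0::real))"
  shows "\<forall>\<^sub>F t in at_right 0. \<forall>\<tau>\<in>{0<..t}. P \<tau>"
  using assms unfolding eventually_at_right_field by (metis greaterThanAtMost_iff le_less_trans)

lemma tendsto_mult_norm_at_right_0:
  assumes "((\<lambda>t. t *\<^sub>R w t) \<longlongrightarrow> 0) (at_right 0)"
  shows "((\<lambda>t. t * norm (w t)) \<longlongrightarrow> 0) (at_right 0)"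
proof -
  have "\<forall>\<^sub>F t in at_right 0. norm (t *\<^sub>R w t) = t * norm (w t)"
    using eventually_at_right_less[of "0::real"] by eventually_elim simp
  with tendsto_norm[OF assms] show ?thesis by (auto intro: Lim_transform_eventually)
qed

(* Let s1 be the last point where the piece active at a is still active: that piece controls
   [a, s1], and on [s1, b] only the remaining pieces are active, so induction applies. *)
lemma selection_dist_le:
  fixes h :: "real \<Rightarrow> 'b::metric_space"
  assumes "finite J" and "a \<le> b" and "continuous_on {a..b} h"
    and "\<And>j. j \<in> J \<Longrightarrow> K-lipschitz_on {a..b} (H j)"
    and "\<And>s. s \<in> {a..b} \<Longrightarrow> \<exists>j\<in>J. h s = H j s"
  shows "dist (h b) (h a) \<le> K * (b - a)"
  using assms
proof (induction "card J" arbitrary: J a b rule: less_induct)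
  case less
  have closed_active: "closed {s \<in> {a..b}. h s = H j s}" if "j \<in> J" for j
  proof -
    have "continuous_on {a..b} (\<lambda>s. dist (h s) (H j s))"
      using less.prems(3) lipschitz_on_continuous_on[OF less.prems(4)[OF that]]
      by (rule continuous_on_dist)
    then have "closed {s \<in> {a..b}. dist (h s) (H j s) = 0}"
      by (rule continuous_closed_preimage_constant) simp
    then show ?thesis by simp
  qed
  obtain j where j: "j \<in> J" "h a = H j a" using less.prems(2,5) by force
  define A where "A = {s \<in> {a..b}. h s = H j s}"
  have "a \<in> A" "bdd_above A" using j less.prems(2) unfolding A_def by auto
  define s1 where "s1 = Sup A"
  have "s1 \<in> A"
    unfolding s1_def using closed_active[OF j(1)] \<open>a \<in> A\<close> \<open>bdd_above A\<close>
    by (intro closed_contains_Sup) (auto simp: A_def)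
  then have s1: "a \<le> s1" "s1 \<le> b" "h s1 = H j s1" unfolding A_def by auto
  have "dist (h s1) (h a) \<le> K * (s1 - a)"
    using lipschitz_onD[OF less.prems(4)[OF j(1)], of s1 a] s1 j by (simp add: dist_real_def)
  moreover have "dist (h b) (h s1) \<le> K * (b - s1)"
  proof (cases "s1 = b")
    case False
    define A' where "A' = (\<Union>j'\<in>J - {j}. {s \<in> {a..b}. h s = H j' s})"
    have "{s1<..b} \<subseteq> A'"
    proof
      fix s assume s: "s \<in> {s1<..b}"
      then have "s \<notin> A" using cSup_upper[OF _ \<open>bdd_above A\<close>] unfolding s1_def by fastforce
      then show "s \<in> A'"
        using s s1 less.prems(5)[of s] unfolding A_def A'_def by fastforce
    qed
    moreover have "closed A'"
      unfolding A'_def using less.prems(1) closed_active by (intro closed_UN) auto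
    ultimately have "closure {s1<..b} \<subseteq> A'" by (rule closure_minimal)
    then have "\<forall>s\<in>{s1..b}. \<exists>j'\<in>J - {j}. h s = H j' s"
      using False s1 unfolding A'_def by auto
    moreover have sub: "{s1..b} \<subseteq> {a..b}" using s1 by auto
    ultimately show ?thesis
      using less.prems(1,3,4) s1(2) j(1)
      by (intro less.hyps[of "J - {j}"] card_Diff1_less)
         (auto intro: continuous_on_subset[OF _ sub] lipschitz_on_subset[OF _ sub])
  qed simp
  ultimately show ?case
    using dist_triangle[of "h b" "h a" "h s1"] unfolding right_diff_distrib by linarith
qed

lemma lipschitz_on_convex_selection:
  fixes h :: "'a::real_normed_vector \<Rightarrow> 'b::metric_space"
  assumes "convex S" and "finite F" and "0 \<le> K" and "continuous_on S h"
    and "\<And>f. f \<in> F \<Longrightarrow> K-lipschitz_on S f"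
    and "\<And>y. y \<in> S \<Longrightarrow> \<exists>f\<in>F. h y = f y"
  shows "K-lipschitz_on S h"
proof (rule lipschitz_onI)
  fix y z assume "y \<in> S" "z \<in> S"
  define \<gamma> where "\<gamma> s = y + s *\<^sub>R (z - y)" for s :: real
  have \<gamma>_in: "\<gamma> ` {0..1} \<subseteq> S"
  proof -
    have "\<gamma> s = (1 - s) *\<^sub>R y + s *\<^sub>R z" for s unfolding \<gamma>_def by (simp add: algebra_simps)
    then show ?thesis using assms(1) \<open>y \<in> S\<close> \<open>z \<in> S\<close> unfolding convex_def by auto
  qed
  have \<gamma>_lip: "(dist z y)-lipschitz_on {0..1} \<gamma>"
    by (rule lipschitz_onI) (auto simp: \<gamma>_def dist_norm scaleR_diff_left[symmetric] dist_real_def)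
  have h\<gamma>: "continuous_on {0..1} (h \<circ> \<gamma>)"
    using lipschitz_on_continuous_on[OF \<gamma>_lip] continuous_on_subset[OF assms(4) \<gamma>_in]
    by (rule continuous_on_compose)
  have f\<gamma>: "(K * dist z y)-lipschitz_on {0..1} (f \<circ> \<gamma>)" if "f \<in> F" for f
  proof -
    have "K-lipschitz_on (\<gamma> ` {0..1}) f" using assms(5)[OF that] \<gamma>_in by (rule lipschitz_on_subset)
    from lipschitz_on_compose[OF \<gamma>_lip this] show ?thesis by (simp only: mult.commute)
  qed
  have sel: "\<exists>f\<in>F. (h \<circ> \<gamma>) s = (f \<circ> \<gamma>) s" if "s \<in> {0..1}" for s
  proof -
    have "\<gamma> s \<in> S" using \<gamma>_in that by blast
    then show ?thesis using assms(6) by simp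
  qed
  have "dist ((h \<circ> \<gamma>) 1) ((h \<circ> \<gamma>) 0) \<le> (K * dist z y) * (1 - 0)"
    by (rule selection_dist_le[OF assms(2) _ h\<gamma> f\<gamma> sel]) simp_all
  then show "dist (h z) (h y) \<le> K * dist z y" by (simp add: \<gamma>_def)
qed (rule assms(3))

lemma second_order_taylor_bound:
  fixes \<phi> \<phi>' \<phi>'' :: "real \<Rightarrow> 'b::real_normed_vector"
  assumes "0 \<le> t"
    and \<phi>': "\<And>s. s \<in> {0..t} \<Longrightarrow> (\<phi> has_vector_derivative \<phi>' s) (at s within {0..t})"
    and \<phi>'': "\<And>s. s \<in> {0..t} \<Longrightarrow> (\<phi>' has_vector_derivative \<phi>'' s) (at s within {0..t})"
    and B: "\<And>s. s \<in> {0..t} \<Longrightarrow> norm (\<phi>'' s - \<phi>'' 0) \<le> B"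
  shows "norm (\<phi> t - \<phi> 0 - t *\<^sub>R \<phi>' 0 - ((1/2) * t\<^sup>2) *\<^sub>R \<phi>'' 0) \<le> B * t\<^sup>2"
proof -
  have seg: "closed_segment 0 s \<subseteq> {0..t}" if "s \<in> {0..t}" for s
    using that \<open>0 \<le> t\<close> by (intro closed_segment_subset) auto
  have "0 \<le> B" using B[of 0] \<open>0 \<le> t\<close> by simp
  define \<psi> where "\<psi> s = \<phi> s - ((1/2) * s\<^sup>2) *\<^sub>R \<phi>'' 0" for s
  define \<psi>' where "\<psi>' s = \<phi>' s - s *\<^sub>R \<phi>'' 0" for s
  have \<psi>': "(\<psi> has_vector_derivative \<psi>' s) (at s within {0..t})" if "s \<in> {0..t}" for s
    unfolding \<psi>_def \<psi>'_def using \<phi>'[OF that] by (auto intro!: derivative_eq_intros)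
  have "norm (\<psi>' s - \<psi>' 0) \<le> t * B" if "s \<in> {0..t}" for s
  proof -
    have "norm (\<phi>' s - \<phi>' 0 - (s - 0) *\<^sub>R \<phi>'' 0) \<le> norm (s - 0) * B"
      using \<phi>'' B seg[OF that] that \<open>0 \<le> t\<close>
      by (intro vector_differentiable_bound_linearization[where S="{0..t}"]) auto
    also have "\<dots> \<le> t * B" using that \<open>0 \<le> B\<close> by (auto intro: mult_right_mono)
    finally show ?thesis unfolding \<psi>'_def by (simp add: algebra_simps)
  qed
  then have "norm (\<psi> t - \<psi> 0 - (t - 0) *\<^sub>R \<psi>' 0) \<le> norm (t - 0) * (t * B)"
    using \<psi>' seg[of t] \<open>0 \<le> t\<close>
    by (intro vector_differentiable_bound_linearization[where S="{0..t}"]) auto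
  then show ?thesis
    using \<open>0 \<le> t\<close> unfolding \<psi>_def \<psi>'_def by (simp add: algebra_simps power2_eq_square)
qed

lemma norm_blinfun_apply2_le:
  "norm (blinfun_apply (blinfun_apply A u) v) \<le> norm A * norm u * norm v"
  using norm_blinfun[of "blinfun_apply A u" v] norm_blinfun[of A u]
  by (meson mult_right_mono norm_ge_zero order_trans)

definition parabola :: "'a::real_vector \<Rightarrow> 'a \<Rightarrow> 'a \<Rightarrow> real \<Rightarrow> 'a" where
  "parabola x d w t = x + t *\<^sub>R d + ((1/2) * t\<^sup>2) *\<^sub>R w"

lemma parabola_0 [simp]: "parabola x d w 0 = x"
  by (simp add: parabola_def)

lemma parabola_has_vector_derivative:
  "(parabola x d w has_vector_derivative (d + s *\<^sub>R w)) (at s within S)"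
  unfolding parabola_def by (auto intro!: derivative_eq_intros)

lemma norm_parabola_diff_le:
  fixes x d w :: "'a::real_normed_vector"
  assumes "0 \<le> s" and "s \<le> t"
  shows "norm (parabola x d w s - x) \<le> t * norm d + t * (t * norm w)"
proof -
  have "norm (parabola x d w s - x) \<le> s * norm d + ((1/2) * s\<^sup>2) * norm w"
    unfolding parabola_def
    using norm_triangle_ineq[of "s *\<^sub>R d" "((1/2) * s\<^sup>2) *\<^sub>R w"] assms(1) by simp
  also have "\<dots> \<le> t * norm d + t * (t * norm w)"
  proof (intro add_mono mult_right_mono)
    have "s\<^sup>2 \<le> t\<^sup>2" using assms by (simp add: power_mono)
    then have "s\<^sup>2 * norm w \<le> t\<^sup>2 * norm w" by (rule mult_right_mono) simp
    moreover have "0 \<le> s\<^sup>2 * norm w" by simp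
    ultimately show "(1/2) * s\<^sup>2 * norm w \<le> t * (t * norm w)"
      by (simp add: power2_eq_square mult.assoc)
  qed (use assms in auto)
  finally show ?thesis .
qed

lemma dist_difference_quotient_le:
  fixes y y0 b c :: "'b::real_normed_vector"
  assumes "0 < \<tau>" and "\<tau> \<le> t" and "t \<le> 1" and "t * norm c \<le> e"
    and "norm (y - y0 - \<tau> *\<^sub>R b - ((1/2) * \<tau>\<^sup>2) *\<^sub>R c) \<le> e * \<tau>\<^sup>2"
  shows "dist ((y - y0) /\<^sub>R \<tau>) b \<le> 2 * e"
proof -
  let ?R = "y - y0 - \<tau> *\<^sub>R b - ((1/2) * \<tau>\<^sup>2) *\<^sub>R c"
  have "0 \<le> e" using assms(1,2,4) by (smt (verit) mult_nonneg_nonneg norm_ge_zero)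
  have "(y - y0) /\<^sub>R \<tau> - b = inverse \<tau> *\<^sub>R ?R + ((1/2) * \<tau>) *\<^sub>R c"
    using assms(1) by (simp add: scaleR_diff_right power2_eq_square)
  then have "dist ((y - y0) /\<^sub>R \<tau>) b \<le> inverse \<tau> * norm ?R + (1/2) * (\<tau> * norm c)"
    using assms(1) norm_triangle_ineq[of "inverse \<tau> *\<^sub>R ?R" "((1/2) * \<tau>) *\<^sub>R c"]
    by (simp add: dist_norm)
  also have "inverse \<tau> * norm ?R \<le> e * \<tau>"
    using assms(1,5) by (simp add: field_simps power2_eq_square)
  also have "e * \<tau> \<le> e" using assms(2,3) \<open>0 \<le> e\<close> by (simp add: mult_left_le)
  also have "\<tau> * norm c \<le> e" using assms(2,4) by (smt (verit) mult_right_mono norm_ge_zero)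
  finally show ?thesis using \<open>0 \<le> e\<close> by simp
qed

lemma dist_second_difference_quotient_le:
  fixes y y0 b c :: "'b::real_normed_vector"
  assumes "0 < \<tau>" and "norm (y - y0 - \<tau> *\<^sub>R b - ((1/2) * \<tau>\<^sup>2) *\<^sub>R c) \<le> e * \<tau>\<^sup>2"
  shows "dist ((y - y0 - \<tau> *\<^sub>R b) /\<^sub>R ((1/2) * \<tau>\<^sup>2)) c \<le> 2 * e"
proof -
  let ?R = "y - y0 - \<tau> *\<^sub>R b - ((1/2) * \<tau>\<^sup>2) *\<^sub>R c"
  have "(y - y0 - \<tau> *\<^sub>R b) /\<^sub>R ((1/2) * \<tau>\<^sup>2) - c = inverse ((1/2) * \<tau>\<^sup>2) *\<^sub>R ?R"
    using assms(1) by (simp add: scaleR_diff_right)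
  then have "dist ((y - y0 - \<tau> *\<^sub>R b) /\<^sub>R ((1/2) * \<tau>\<^sup>2)) c = inverse ((1/2) * \<tau>\<^sup>2) * norm ?R"
    by (simp add: dist_norm)
  also have "\<dots> \<le> inverse ((1/2) * \<tau>\<^sup>2) * (e * \<tau>\<^sup>2)"
    using assms by (intro mult_left_mono) auto
  also have "\<dots> = 2 * e" using assms(1) by (simp add: field_simps)
  finally show ?thesis .
qed

locale C2_selection_ball =
  fixes g :: "'a::real_normed_vector \<Rightarrow> 'b::banach" and x :: 'a and \<rho> :: real
    and F :: "('a \<Rightarrow> 'b) set"
    and D1 :: "('a \<Rightarrow> 'b) \<Rightarrow> 'a \<Rightarrow> ('a \<Rightarrow>\<^sub>L 'b)"
    and D2 :: "('a \<Rightarrow> 'b) \<Rightarrow> 'a \<Rightarrow> ('a \<Rightarrow>\<^sub>L ('a \<Rightarrow>\<^sub>L 'b))"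
    and K M :: real
  assumes finite_pieces: "finite F"
    and radius_pos: "0 < \<rho>"
    and continuous: "continuous_on (ball x \<rho>) g"
    and selection: "\<And>y. y \<in> ball x \<rho> \<Longrightarrow> \<exists>f\<in>F. g y = f y"
    and active: "\<And>f. f \<in> F \<Longrightarrow> f x = g x"
    and D1: "\<And>f y. f \<in> F \<Longrightarrow> y \<in> ball x \<rho> \<Longrightarrow> (f has_derivative D1 f y) (at y)"
    and D2: "\<And>f y. f \<in> F \<Longrightarrow> y \<in> ball x \<rho> \<Longrightarrow> (D1 f has_derivative D2 f y) (at y)"
    and D2_continuous: "\<And>f. f \<in> F \<Longrightarrow> continuous_on (ball x \<rho>) (D2 f)"
    and D1_bound: "\<And>f y. f \<in> F \<Longrightarrow> y \<in> ball x \<rho> \<Longrightarrow> norm (D1 f y) \<le> K"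
    and D2_bound: "\<And>f y. f \<in> F \<Longrightarrow> y \<in> ball x \<rho> \<Longrightarrow> norm (D2 f y) \<le> M"
begin

lemma centre_in_ball: "x \<in> ball x \<rho>"
  using radius_pos by simp

lemma pieces_nonempty: "F \<noteq> {}"
  using selection[OF centre_in_ball] by auto

lemma K_nonneg: "0 \<le> K"
  using pieces_nonempty D1_bound[OF _ centre_in_ball] norm_ge_zero order_trans by blast

lemma M_nonneg: "0 \<le> M"
  using pieces_nonempty D2_bound[OF _ centre_in_ball] norm_ge_zero order_trans by blast

lemma piece_lipschitz:
  assumes "f \<in> F"
  shows "K-lipschitz_on (ball x \<rho>) f"
proof (rule bounded_derivative_imp_lipschitz[OF _ convex_ball _ K_nonneg])
  fix y assume "y \<in> ball x \<rho>"
  show "(f has_derivative blinfun_apply (D1 f y)) (at y within ball x \<rho>)"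
    using D1[OF assms \<open>y \<in> ball x \<rho>\<close>] by (rule has_derivative_at_withinI)
  show "onorm (blinfun_apply (D1 f y)) \<le> K"
    using D1_bound[OF assms \<open>y \<in> ball x \<rho>\<close>] by (simp add: norm_blinfun.rep_eq)
qed

lemma D1_lipschitz:
  assumes "f \<in> F"
  shows "M-lipschitz_on (ball x \<rho>) (D1 f)"
proof (rule bounded_derivative_imp_lipschitz[OF _ convex_ball _ M_nonneg])
  fix y assume "y \<in> ball x \<rho>"
  show "(D1 f has_derivative blinfun_apply (D2 f y)) (at y within ball x \<rho>)"
    using D2[OF assms \<open>y \<in> ball x \<rho>\<close>] by (rule has_derivative_at_withinI)
  show "onorm (blinfun_apply (D2 f y)) \<le> M"
    using D2_bound[OF assms \<open>y \<in> ball x \<rho>\<close>] by (simp add: norm_blinfun.rep_eq)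
qed

lemma lipschitz: "K-lipschitz_on (ball x \<rho>) g"
  by (rule lipschitz_on_convex_selection[OF convex_ball finite_pieces K_nonneg continuous
        piece_lipschitz selection])

lemma locally_lipschitz: "locally_lipschitz_at g x"
  unfolding locally_lipschitz_at_def using radius_pos lipschitz by blast

definition piece_dir_deriv2 :: "('a \<Rightarrow> 'b) \<Rightarrow> 'a \<Rightarrow> 'a \<Rightarrow> 'b" where
  "piece_dir_deriv2 f d w = D1 f x w + D2 f x d d"

lemma piece_taylor_parabola:
  assumes f: "f \<in> F" and "0 \<le> t"
    and in_ball: "\<And>s. s \<in> {0..t} \<Longrightarrow> parabola x d w s \<in> ball x \<rho>"
    and B: "\<And>s. s \<in> {0..t} \<Longrightarrow>
      norm (D1 f (parabola x d w s) w + D2 f (parabola x d w s) (d + s *\<^sub>R w) (d + s *\<^sub>R w)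
        - piece_dir_deriv2 f d w) \<le> B"
  shows "norm (f (parabola x d w t) - g x - t *\<^sub>R D1 f x d
      - ((1/2) * t\<^sup>2) *\<^sub>R piece_dir_deriv2 f d w) \<le> B * t\<^sup>2"
proof -
  let ?p = "parabola x d w"
  have \<phi>': "((\<lambda>s. f (?p s)) has_vector_derivative D1 f (?p s) (d + s *\<^sub>R w)) (at s within {0..t})"
    if "s \<in> {0..t}" for s
    using vector_derivative_diff_chain_within[OF parabola_has_vector_derivative
        has_derivative_at_withinI[OF D1[OF f in_ball[OF that]]]]
    by (simp add: comp_def)
  have \<phi>'': "((\<lambda>s. D1 f (?p s) (d + s *\<^sub>R w)) has_vector_derivative
      D1 f (?p s) w + D2 f (?p s) (d + s *\<^sub>R w) (d + s *\<^sub>R w)) (at s within {0..t})"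
    if "s \<in> {0..t}" for s
  proof -
    have "((D1 f \<circ> ?p) has_vector_derivative D2 f (?p s) (d + s *\<^sub>R w)) (at s within {0..t})"
      using has_derivative_at_withinI[OF D2[OF f in_ball[OF that]]]
      by (rule vector_derivative_diff_chain_within[OF parabola_has_vector_derivative])
    moreover have "((\<lambda>s. d + s *\<^sub>R w) has_vector_derivative w) (at s within {0..t})"
      by (auto intro!: derivative_eq_intros)
    ultimately show ?thesis
      using bounded_bilinear.has_vector_derivative[OF bounded_bilinear_blinfun_apply] by fastforce
  qed
  have "norm (f (?p t) - f (?p 0) - t *\<^sub>R D1 f (?p 0) (d + 0 *\<^sub>R w)
      - ((1/2) * t\<^sup>2) *\<^sub>R (D1 f (?p 0) w + D2 f (?p 0) (d + 0 *\<^sub>R w) (d + 0 *\<^sub>R w))) \<le> B * t\<^sup>2"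
  proof (rule second_order_taylor_bound[where \<phi>="\<lambda>s. f (?p s)", OF \<open>0 \<le> t\<close> \<phi>' \<phi>''])
    have "piece_dir_deriv2 f d w = D1 f (?p 0) w + D2 f (?p 0) (d + 0 *\<^sub>R w) (d + 0 *\<^sub>R w)"
      by (simp add: piece_dir_deriv2_def)
    with B show "norm (D1 f (?p s) w + D2 f (?p s) (d + s *\<^sub>R w) (d + s *\<^sub>R w)
        - (D1 f (?p 0) w + D2 f (?p 0) (d + 0 *\<^sub>R w) (d + 0 *\<^sub>R w))) \<le> B"
      if "s \<in> {0..t}" for s
      using that by simp
  qed
  then show ?thesis using active[OF f] by (simp add: piece_dir_deriv2_def)
qed

lemma piece_dir_deriv2_deviation:
  assumes f: "f \<in> F" and "0 \<le> s" and y: "parabola x d w s \<in> ball x \<rho>"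
    and \<eta>: "norm (D2 f (parabola x d w s) - D2 f x) \<le> \<eta>" and a: "s * norm w \<le> a"
  shows "norm (D1 f (parabola x d w s) w + D2 f (parabola x d w s) (d + s *\<^sub>R w) (d + s *\<^sub>R w)
      - piece_dir_deriv2 f d w) \<le> \<eta> * (norm d + a)\<^sup>2 + M * a * (3 * norm d + 2 * a)"
proof -
  define y where "y = parabola x d w s"
  define v where "v = d + s *\<^sub>R w"
  have "0 \<le> a" using order_trans[OF mult_nonneg_nonneg[OF \<open>0 \<le> s\<close> norm_ge_zero] a] .
  have "0 \<le> \<eta>" using \<eta> norm_ge_zero order_trans by blast
  have v: "norm v \<le> norm d + a" and v_d: "norm (v - d) \<le> a"
    unfolding v_def using norm_triangle_ineq[of d "s *\<^sub>R w"] a \<open>0 \<le> s\<close> by simp_all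
  have "norm (y - x) * norm w \<le> (s * norm d + s * (s * norm w)) * norm w"
    unfolding y_def using norm_parabola_diff_le[OF \<open>0 \<le> s\<close> order_refl] by (rule mult_right_mono) simp
  also have "\<dots> = norm d * (s * norm w) + (s * norm w) * (s * norm w)"
    by (simp add: algebra_simps)
  also have "\<dots> \<le> norm d * a + a * a"
    using a \<open>0 \<le> s\<close> \<open>0 \<le> a\<close> by (intro add_mono mult_left_mono mult_mono) auto
  finally have y_x: "norm (y - x) * norm w \<le> norm d * a + a * a" .
  have "norm ((D1 f y - D1 f x) w) \<le> M * (norm d * a + a * a)"
  proof -
    have "norm ((D1 f y - D1 f x) w) \<le> norm (D1 f y - D1 f x) * norm w" by (rule norm_blinfun)
    also have "\<dots> \<le> M * norm (y - x) * norm w"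
      using lipschitz_onD[OF D1_lipschitz[OF f] y[folded y_def] centre_in_ball]
      by (intro mult_right_mono) (simp_all add: dist_norm)
    also have "\<dots> \<le> M * (norm d * a + a * a)"
      using y_x M_nonneg by (simp add: mult.assoc mult_left_mono)
    finally show ?thesis .
  qed
  moreover have "norm ((D2 f y - D2 f x) v v) \<le> \<eta> * (norm d + a) * (norm d + a)"
    using \<eta>[folded y_def] v \<open>0 \<le> \<eta>\<close> \<open>0 \<le> a\<close>
    by (intro order_trans[OF norm_blinfun_apply2_le] mult_mono) auto
  moreover have "norm (D2 f x (v - d) v) \<le> M * a * (norm d + a)"
    using D2_bound[OF f centre_in_ball] v v_d M_nonneg \<open>0 \<le> a\<close>
    by (intro order_trans[OF norm_blinfun_apply2_le] mult_mono) auto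
  moreover have "norm (D2 f x d (v - d)) \<le> M * norm d * a"
    using D2_bound[OF f centre_in_ball] v_d M_nonneg
    by (intro order_trans[OF norm_blinfun_apply2_le] mult_mono) auto
  moreover have "D1 f y w + D2 f y v v - piece_dir_deriv2 f d w
      = (D1 f y - D1 f x) w + (D2 f y - D2 f x) v v + D2 f x (v - d) v + D2 f x d (v - d)"
    unfolding piece_dir_deriv2_def by (simp add: blinfun.diff_left blinfun.diff_right algebra_simps)
  ultimately have "norm (D1 f y w + D2 f y v v - piece_dir_deriv2 f d w)
      \<le> M * (norm d * a + a * a) + \<eta> * (norm d + a) * (norm d + a) + M * a * (norm d + a)
        + M * norm d * a"
    by (smt (verit) norm_triangle_ineq)
  also have "\<dots> = \<eta> * (norm d + a)\<^sup>2 + M * a * (3 * norm d + 2 * a)"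
    by (simp add: algebra_simps power2_eq_square)
  finally show ?thesis unfolding y_def v_def .
qed

lemma D2_near_centre:
  assumes "0 < \<eta>"
  obtains \<delta> where "0 < \<delta>" and "\<And>f y. f \<in> F \<Longrightarrow> dist y x < \<delta> \<Longrightarrow> norm (D2 f y - D2 f x) \<le> \<eta>"
proof -
  have "\<forall>f\<in>F. \<forall>\<^sub>F y in nhds x. dist (D2 f y) (D2 f x) < \<eta>"
  proof
    fix f assume "f \<in> F"
    then have "isCont (D2 f) x"
      using D2_continuous centre_in_ball continuous_on_eq_continuous_at[OF open_ball] by blast
    then have "(D2 f \<longlongrightarrow> D2 f x) (nhds x)"
      unfolding isCont_def tendsto_at_iff_tendsto_nhds .
    then show "\<forall>\<^sub>F y in nhds x. dist (D2 f y) (D2 f x) < \<eta>" using assms by (rule tendstoD)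
  qed
  then have "\<forall>\<^sub>F y in nhds x. \<forall>f\<in>F. dist (D2 f y) (D2 f x) < \<eta>"
    by (rule eventually_ball_finite[OF finite_pieces])
  then obtain \<delta> where "0 < \<delta>" and \<delta>: "\<And>y. dist y x < \<delta> \<Longrightarrow> \<forall>f\<in>F. dist (D2 f y) (D2 f x) < \<eta>"
    unfolding eventually_nhds_metric by blast
  show thesis
  proof (rule that[OF \<open>0 < \<delta>\<close>])
    fix f y assume "f \<in> F" "dist y x < \<delta>"
    then have "dist (D2 f y) (D2 f x) < \<eta>" using \<delta> by blast
    then show "norm (D2 f y - D2 f x) \<le> \<eta>" by (simp add: dist_norm)
  qed
qed

lemma eventually_taylor_parabola:
  assumes w: "((\<lambda>t. t *\<^sub>R w t) \<longlongrightarrow> 0) (at_right 0)" and "0 < \<epsilon>"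
  shows "\<forall>\<^sub>F t in at_right 0. 0 < t \<and> t \<le> 1 \<and>
      (\<forall>\<tau>\<in>{0<..t}. parabola x d (w t) \<tau> \<in> ball x \<rho>) \<and>
      (\<forall>f\<in>F. t * norm (piece_dir_deriv2 f d (w t)) \<le> \<epsilon>) \<and>
      (\<forall>f\<in>F. \<forall>\<tau>\<in>{0<..t}. norm (f (parabola x d (w t) \<tau>) - g x - \<tau> *\<^sub>R D1 f x d
          - ((1/2) * \<tau>\<^sup>2) *\<^sub>R piece_dir_deriv2 f d (w t)) \<le> \<epsilon> * \<tau>\<^sup>2)"
proof -
  define a where "a t = t * norm (w t)" for t
  have a: "(a \<longlongrightarrow> 0) (at_right 0)"
    unfolding a_def by (rule tendsto_mult_norm_at_right_0[OF w])
  define \<eta> where "\<eta> = \<epsilon> / (2 * ((norm d)\<^sup>2 + 1))"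
  have "0 < (norm d)\<^sup>2 + 1" by (simp add: add_nonneg_pos)
  then have "0 < \<eta>" unfolding \<eta>_def using \<open>0 < \<epsilon>\<close> by simp
  have "\<eta> * (norm d)\<^sup>2 < \<epsilon>"
  proof -
    have "\<eta> * (norm d)\<^sup>2 \<le> \<eta> * ((norm d)\<^sup>2 + 1)" using \<open>0 < \<eta>\<close> by simp
    also have "\<dots> = \<epsilon> / 2"
      unfolding \<eta>_def using \<open>0 < (norm d)\<^sup>2 + 1\<close> by (simp add: field_simps)
    finally show ?thesis using \<open>0 < \<epsilon>\<close> by simp
  qed
  obtain \<delta> where "0 < \<delta>" and \<delta>: "\<And>f y. f \<in> F \<Longrightarrow> dist y x < \<delta> \<Longrightarrow> norm (D2 f y - D2 f x) \<le> \<eta>"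
    using D2_near_centre[OF \<open>0 < \<eta>\<close>] by blast
  have "((\<lambda>t. t * norm d + t * a t) \<longlongrightarrow> 0 * norm d + 0 * 0) (at_right 0)"
    by (intro tendsto_intros a)
  then have ev_near: "\<forall>\<^sub>F t in at_right 0. t * norm d + t * a t < min \<delta> \<rho>"
    using \<open>0 < \<delta>\<close> radius_pos by (intro order_tendstoD(2)) auto
  have "((\<lambda>t. \<eta> * (norm d + a t)\<^sup>2 + M * a t * (3 * norm d + 2 * a t))
      \<longlongrightarrow> \<eta> * (norm d + 0)\<^sup>2 + M * 0 * (3 * norm d + 2 * 0)) (at_right 0)"
    by (intro tendsto_intros a)
  then have ev_dev: "\<forall>\<^sub>F t in at_right 0. \<eta> * (norm d + a t)\<^sup>2 + M * a t * (3 * norm d + 2 * a t) < \<epsilon>"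
    using \<open>\<eta> * (norm d)\<^sup>2 < \<epsilon>\<close> by (intro order_tendstoD(2)) auto
  have "((\<lambda>t. K * a t + t * (M * (norm d * norm d))) \<longlongrightarrow> K * 0 + 0 * (M * (norm d * norm d)))
      (at_right 0)"
    by (intro tendsto_intros a)
  then have ev_centre: "\<forall>\<^sub>F t in at_right 0. K * a t + t * (M * (norm d * norm d)) < \<epsilon>"
    using \<open>0 < \<epsilon>\<close> by (intro order_tendstoD(2)) auto
  have ev_small: "\<forall>\<^sub>F t in at_right (0::real). 0 < t \<and> t \<le> 1"
    unfolding eventually_at_right_field by (intro exI[of _ 1]) auto
  show ?thesis
    using ev_near ev_dev ev_centre ev_small
  proof eventually_elim
    case (elim t)
    then have t: "0 < t" "t \<le> 1" by auto
    have near: "dist (parabola x d (w t) s) x < min \<delta> \<rho>" if "0 \<le> s" "s \<le> t" for s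
      using norm_parabola_diff_le[OF that, of x d "w t"] elim unfolding a_def dist_norm by simp
    then have in_ball: "parabola x d (w t) s \<in> ball x \<rho>" if "0 \<le> s" "s \<le> t" for s
      using that by (simp add: dist_commute)
    have centre: "t * norm (piece_dir_deriv2 f d (w t)) \<le> \<epsilon>" if f: "f \<in> F" for f
    proof -
      have "norm (D1 f x (w t)) \<le> K * norm (w t)"
        using D1_bound[OF f centre_in_ball]
        by (intro order_trans[OF norm_blinfun] mult_right_mono) auto
      moreover have "norm (D2 f x d d) \<le> M * norm d * norm d"
        using D2_bound[OF f centre_in_ball]
        by (intro order_trans[OF norm_blinfun_apply2_le] mult_right_mono) auto
      ultimately have "norm (piece_dir_deriv2 f d (w t)) \<le> K * norm (w t) + M * norm d * norm d"
        unfolding piece_dir_deriv2_def by (intro norm_triangle_le add_mono)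
      then have "t * norm (piece_dir_deriv2 f d (w t)) \<le> t * (K * norm (w t) + M * norm d * norm d)"
        using t by (simp add: mult_left_mono)
      also have "\<dots> = K * a t + t * (M * (norm d * norm d))"
        unfolding a_def by (simp add: algebra_simps)
      finally show ?thesis using elim by simp
    qed
    have "norm (f (parabola x d (w t) \<tau>) - g x - \<tau> *\<^sub>R D1 f x d
        - ((1/2) * \<tau>\<^sup>2) *\<^sub>R piece_dir_deriv2 f d (w t)) \<le> \<epsilon> * \<tau>\<^sup>2"
      if f: "f \<in> F" and \<tau>: "\<tau> \<in> {0<..t}" for f \<tau>
    proof (rule piece_taylor_parabola[OF f])
      fix s assume s: "s \<in> {0..\<tau>}"
      then have "0 \<le> s" "s \<le> t" using \<tau> by auto
      then have "norm (D2 f (parabola x d (w t) s) - D2 f x) \<le> \<eta>"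
        using \<delta>[OF f] near by simp
      moreover have "s * norm (w t) \<le> a t"
        unfolding a_def using \<open>s \<le> t\<close> by (simp add: mult_right_mono)
      ultimately have "norm (D1 f (parabola x d (w t) s) (w t)
          + D2 f (parabola x d (w t) s) (d + s *\<^sub>R w t) (d + s *\<^sub>R w t) - piece_dir_deriv2 f d (w t))
        \<le> \<eta> * (norm d + a t)\<^sup>2 + M * a t * (3 * norm d + 2 * a t)"
        by (rule piece_dir_deriv2_deviation[OF f \<open>0 \<le> s\<close> in_ball[OF \<open>0 \<le> s\<close> \<open>s \<le> t\<close>]])
      then show "norm (D1 f (parabola x d (w t) s) (w t)
          + D2 f (parabola x d (w t) s) (d + s *\<^sub>R w t) (d + s *\<^sub>R w t) - piece_dir_deriv2 f d (w t))
        \<le> \<epsilon>" using elim by linarith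
      show "parabola x d (w t) s \<in> ball x \<rho>" using in_ball \<open>0 \<le> s\<close> \<open>s \<le> t\<close> by blast
    qed (use \<tau> in simp)
    then show ?case using t in_ball centre by auto
  qed
qed

lemma continuous_on_along_parabola:
  assumes "\<And>\<tau>. \<tau> \<in> {0<..t} \<Longrightarrow> parabola x d w \<tau> \<in> ball x \<rho>"
  shows "continuous_on {0<..t} (\<lambda>\<tau>. g (parabola x d w \<tau>))"
proof (rule continuous_on_compose2[OF continuous])
  show "continuous_on {0<..t} (parabola x d w)"
    unfolding parabola_def by (intro continuous_intros)
qed (use assms in auto)

lemma dir_deriv_tendsto:
  "((\<lambda>\<tau>. (g (x + \<tau> *\<^sub>R d) - g x) /\<^sub>R \<tau>) \<longlongrightarrow> dir_deriv g x d) (at_right 0)"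
  unfolding dir_deriv_def
proof (rule tendsto_Lim_at_right_if_Cauchy)
  fix \<epsilon> :: real assume "0 < \<epsilon>"
  define e where "e = \<epsilon> / (2 * 3 ^ card F)"
  have "0 < e" using \<open>0 < \<epsilon>\<close> unfolding e_def by simp
  have straight: "parabola x d 0 \<tau> = x + \<tau> *\<^sub>R d" for \<tau> by (simp add: parabola_def)
  have "((\<lambda>t. t *\<^sub>R (0::'a)) \<longlongrightarrow> 0) (at_right 0)" by simp
  from eventually_taylor_parabola[OF this \<open>0 < e\<close>, of d]
  show "\<forall>\<^sub>F t in at_right 0. \<forall>\<tau>\<in>{0<..t}.
      dist ((g (x + \<tau> *\<^sub>R d) - g x) /\<^sub>R \<tau>) ((g (x + t *\<^sub>R d) - g x) /\<^sub>R t) \<le> \<epsilon>"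
  proof eventually_elim
    case (elim t)
    then have t: "0 < t" "t \<le> 1"
      and in_ball: "\<And>\<tau>. \<tau> \<in> {0<..t} \<Longrightarrow> x + \<tau> *\<^sub>R d \<in> ball x \<rho>"
      and centre: "\<And>f. f \<in> F \<Longrightarrow> t * norm (piece_dir_deriv2 f d 0) \<le> e"
      and taylor: "\<And>f \<tau>. f \<in> F \<Longrightarrow> \<tau> \<in> {0<..t} \<Longrightarrow> norm (f (x + \<tau> *\<^sub>R d) - g x
          - \<tau> *\<^sub>R D1 f x d - ((1/2) * \<tau>\<^sup>2) *\<^sub>R piece_dir_deriv2 f d 0) \<le> e * \<tau>\<^sup>2"
      by (auto simp: straight)
    have near: "\<exists>f\<in>F. dist ((g (x + \<tau> *\<^sub>R d) - g x) /\<^sub>R \<tau>) (D1 f x d) \<le> 2 * e"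
      if \<tau>: "\<tau> \<in> {0<..t}" for \<tau>
    proof -
      obtain f where f: "f \<in> F" and active_f: "g (x + \<tau> *\<^sub>R d) = f (x + \<tau> *\<^sub>R d)"
        using selection[OF in_ball[OF \<tau>]] by blast
      have "dist ((f (x + \<tau> *\<^sub>R d) - g x) /\<^sub>R \<tau>) (D1 f x d) \<le> 2 * e"
        by (rule dist_difference_quotient_le[where t=t]) (use \<tau> t centre[OF f] taylor[OF f] in auto)
      then show ?thesis using f active_f by auto
    qed
    have cont: "continuous_on {0<..t} (\<lambda>\<tau>. (g (x + \<tau> *\<^sub>R d) - g x) /\<^sub>R \<tau>)"
      using continuous_on_along_parabola[of t d 0] in_ball
      by (intro continuous_intros) (auto simp: straight)
    show ?case
    proof
      fix \<tau> assume "\<tau> \<in> {0<..t}"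
      have "dist ((g (x + \<tau> *\<^sub>R d) - g x) /\<^sub>R \<tau>) ((g (x + t *\<^sub>R d) - g x) /\<^sub>R t)
          \<le> 3 ^ card F * (2 * e)"
        using \<open>0 < e\<close> \<open>\<tau> \<in> {0<..t}\<close>
        by (intro continuous_on_near_finite_dist_le[where c="\<lambda>f. D1 f x d",
              OF cont finite_pieces _ near]) auto
      then show "dist ((g (x + \<tau> *\<^sub>R d) - g x) /\<^sub>R \<tau>) ((g (x + t *\<^sub>R d) - g x) /\<^sub>R t) \<le> \<epsilon>"
        unfolding e_def by simp
    qed
  qed
qed

(* For an active piece f the difference quotient at parabola x d (w t) s is close to D1 f x d;
   by the Lipschitz bound it is also close to the quotient along the straight line x + s d,
   which tends to g'(x;d). *)
lemma eventually_active_pieces_dir_deriv: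
  assumes w: "((\<lambda>t. t *\<^sub>R w t) \<longlongrightarrow> 0) (at_right 0)"
  shows "\<forall>\<^sub>F t in at_right 0. \<forall>\<tau>\<in>{0<..t}. \<forall>f\<in>F.
    g (parabola x d (w t) \<tau>) = f (parabola x d (w t) \<tau>) \<longrightarrow> D1 f x d = dir_deriv g x d"
proof -
  define b where "b = dir_deriv g x d"
  have "\<forall>f\<in>F. \<forall>\<^sub>F t in at_right 0. \<forall>\<tau>\<in>{0<..t}.
    g (parabola x d (w t) \<tau>) = f (parabola x d (w t) \<tau>) \<longrightarrow> D1 f x d = b"
  proof
    fix f assume f: "f \<in> F"
    show "\<forall>\<^sub>F t in at_right 0. \<forall>\<tau>\<in>{0<..t}.
      g (parabola x d (w t) \<tau>) = f (parabola x d (w t) \<tau>) \<longrightarrow> D1 f x d = b"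
    proof (cases "D1 f x d = b")
      case False
      define \<gamma> where "\<gamma> = dist (D1 f x d) b"
      have "0 < \<gamma>" using False by (simp add: \<gamma>_def)
      have "\<forall>\<^sub>F \<tau> in at_right 0. dist ((g (x + \<tau> *\<^sub>R d) - g x) /\<^sub>R \<tau>) b < \<gamma> / 4"
        using dir_deriv_tendsto[of d] \<open>0 < \<gamma>\<close> unfolding b_def by (intro tendstoD) auto
      then have ev_straight: "\<forall>\<^sub>F t in at_right 0.
          \<forall>\<tau>\<in>{0<..t}. dist ((g (x + \<tau> *\<^sub>R d) - g x) /\<^sub>R \<tau>) b < \<gamma> / 4"
        by (rule eventually_at_right_0_all_below)
      have "((\<lambda>t. K * (t * norm (w t))) \<longlongrightarrow> K * 0) (at_right 0)"
        by (intro tendsto_intros tendsto_mult_norm_at_right_0[OF w])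
      then have ev_bend: "\<forall>\<^sub>F t in at_right 0. K * (t * norm (w t)) < \<gamma> / 4"
        using \<open>0 < \<gamma>\<close> by (intro order_tendstoD(2)) auto
      have "((\<lambda>t. t * norm d) \<longlongrightarrow> 0 * norm d) (at_right 0)"
        by (intro tendsto_intros)
      then have ev_ball: "\<forall>\<^sub>F t in at_right 0. t * norm d < \<rho>"
        using radius_pos by (intro order_tendstoD(2)) auto
      have "0 < \<gamma> / 8" using \<open>0 < \<gamma>\<close> by simp
      from eventually_taylor_parabola[OF w this, of d] ev_straight ev_bend ev_ball
      show ?thesis
      proof eventually_elim
        case (elim t)
        then have t: "0 < t" "t \<le> 1" by auto
        show ?case
        proof (intro ballI impI)
          fix \<tau> assume \<tau>: "\<tau> \<in> {0<..t}"
            and active_f: "g (parabola x d (w t) \<tau>) = f (parabola x d (w t) \<tau>)"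
          define p where "p = parabola x d (w t) \<tau>"
          define p0 where "p0 = x + \<tau> *\<^sub>R d"
          have "0 < \<tau>" "\<tau> \<le> t" using \<tau> by auto
          have "dist ((f p - g x) /\<^sub>R \<tau>) (D1 f x d) \<le> 2 * (\<gamma> / 8)"
            using \<open>0 < \<tau>\<close> \<open>\<tau> \<le> t\<close> t elim f \<tau> unfolding p_def
            by (intro dist_difference_quotient_le[where t=t]) auto
          then have A: "dist ((g p - g x) /\<^sub>R \<tau>) (D1 f x d) \<le> \<gamma> / 4"
            using active_f unfolding p_def by simp
          have "p \<in> ball x \<rho>" using elim \<tau> unfolding p_def by blast
          moreover have "p0 \<in> ball x \<rho>"
          proof -
            have "norm (\<tau> *\<^sub>R d) \<le> t * norm d"
              using \<open>0 < \<tau>\<close> \<open>\<tau> \<le> t\<close> by (simp add: mult_right_mono)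
            then show ?thesis using elim unfolding p0_def by (simp add: dist_norm)
          qed
          ultimately have "norm (g p - g p0) \<le> K * norm (p - p0)"
            using lipschitz_onD[OF lipschitz] by (simp add: dist_norm)
          also have "p - p0 = ((1/2) * \<tau>\<^sup>2) *\<^sub>R w t"
            unfolding p_def p0_def parabola_def by simp
          finally have "norm (g p - g p0) \<le> K * ((1/2) * \<tau>\<^sup>2 * norm (w t))"
            by simp
          then have "norm (g p - g p0) / \<tau> \<le> K * ((1/2) * \<tau>\<^sup>2 * norm (w t)) / \<tau>"
            using \<open>0 < \<tau>\<close> by (intro divide_right_mono) auto
          also have "\<dots> = K * ((1/2) * \<tau> * norm (w t))"
            using \<open>0 < \<tau>\<close> by (simp add: power2_eq_square)
          also have "\<dots> \<le> K * (t * norm (w t))"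
            using \<open>0 < \<tau>\<close> \<open>\<tau> \<le> t\<close> K_nonneg by (intro mult_left_mono mult_right_mono) auto
          also have "norm (g p - g p0) / \<tau> = dist ((g p - g x) /\<^sub>R \<tau>) ((g p0 - g x) /\<^sub>R \<tau>)"
          proof -
            have "(g p - g x) /\<^sub>R \<tau> - (g p0 - g x) /\<^sub>R \<tau> = (g p - g p0) /\<^sub>R \<tau>"
              by (simp add: algebra_simps)
            then show ?thesis using \<open>0 < \<tau>\<close> by (simp add: dist_norm divide_inverse_commute)
          qed
          finally have B: "dist ((g p - g x) /\<^sub>R \<tau>) ((g p0 - g x) /\<^sub>R \<tau>) < \<gamma> / 4"
            using elim by linarith
          have C: "dist ((g p0 - g x) /\<^sub>R \<tau>) b < \<gamma> / 4" using elim \<tau> unfolding p0_def by blast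
          have "\<gamma> \<le> dist ((g p - g x) /\<^sub>R \<tau>) (D1 f x d) + dist ((g p - g x) /\<^sub>R \<tau>) b"
            unfolding \<gamma>_def by (rule dist_triangle3)
          moreover have "dist ((g p - g x) /\<^sub>R \<tau>) b
              \<le> dist ((g p - g x) /\<^sub>R \<tau>) ((g p0 - g x) /\<^sub>R \<tau>) + dist ((g p0 - g x) /\<^sub>R \<tau>) b"
            by (rule dist_triangle)
          ultimately show "D1 f x d = b" using A B C \<open>0 < \<gamma>\<close> by linarith
        qed
      qed
    qed simp
  qed
  then have "\<forall>\<^sub>F t in at_right 0. \<forall>f\<in>F. \<forall>\<tau>\<in>{0<..t}.
    g (parabola x d (w t) \<tau>) = f (parabola x d (w t) \<tau>) \<longrightarrow> D1 f x d = b"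
    by (rule eventually_ball_finite[OF finite_pieces])
  then show ?thesis unfolding b_def by eventually_elim blast
qed

definition second_quotient :: "'a \<Rightarrow> 'a \<Rightarrow> real \<Rightarrow> 'b" where
  "second_quotient d w \<tau> = (g (parabola x d w \<tau>) - g x - \<tau> *\<^sub>R dir_deriv g x d) /\<^sub>R ((1/2) * \<tau>\<^sup>2)"

lemma eventually_second_quotient_Cauchy:
  assumes w: "((\<lambda>t. t *\<^sub>R w t) \<longlongrightarrow> 0) (at_right 0)" and "0 < \<epsilon>"
  shows "\<forall>\<^sub>F t in at_right 0. \<forall>\<tau>\<in>{0<..t}.
    dist (second_quotient d (w t) \<tau>) (second_quotient d (w t) t) \<le> \<epsilon>"
proof -
  define e where "e = \<epsilon> / (2 * 3 ^ card F)"
  have "0 < e" using \<open>0 < \<epsilon>\<close> unfolding e_def by simp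
  from eventually_taylor_parabola[OF w this, of d] eventually_active_pieces_dir_deriv[OF w, of d]
  show ?thesis
  proof eventually_elim
    case (elim t)
    then have in_ball: "\<And>\<tau>. \<tau> \<in> {0<..t} \<Longrightarrow> parabola x d (w t) \<tau> \<in> ball x \<rho>" by blast
    have near: "\<exists>f\<in>F. dist (second_quotient d (w t) \<tau>) (piece_dir_deriv2 f d (w t)) \<le> 2 * e"
      if \<tau>: "\<tau> \<in> {0<..t}" for \<tau>
    proof -
      obtain f where f: "f \<in> F"
        and active_f: "g (parabola x d (w t) \<tau>) = f (parabola x d (w t) \<tau>)"
        using selection[OF in_ball[OF \<tau>]] by blast
      then have "D1 f x d = dir_deriv g x d" using elim \<tau> by blast
      then have "dist (second_quotient d (w t) \<tau>) (piece_dir_deriv2 f d (w t)) \<le> 2 * e"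
        unfolding second_quotient_def active_f using elim f \<tau>
        by (intro dist_second_difference_quotient_le) auto
      then show ?thesis using f by blast
    qed
    have cont: "continuous_on {0<..t} (second_quotient d (w t))"
      unfolding second_quotient_def using continuous_on_along_parabola[OF in_ball]
      by (intro continuous_intros) auto
    show ?case
    proof
      fix \<tau> assume "\<tau> \<in> {0<..t}"
      then have "dist (second_quotient d (w t) \<tau>) (second_quotient d (w t) t) \<le> 3 ^ card F * (2 * e)"
        using \<open>0 < e\<close> by (intro continuous_on_near_finite_dist_le[OF cont finite_pieces _ near]) auto
      then show "dist (second_quotient d (w t) \<tau>) (second_quotient d (w t) t) \<le> \<epsilon>"
        unfolding e_def by simp
    qed
  qed
qed

lemma dir_deriv2_eq_Lim: "dir_deriv2 g x d w = Lim (at_right 0) (second_quotient d w)"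
  unfolding dir_deriv2_def second_quotient_def parabola_def ..

lemma second_quotient_tendsto: "(second_quotient d w \<longlongrightarrow> dir_deriv2 g x d w) (at_right 0)"
  unfolding dir_deriv2_eq_Lim
proof (rule tendsto_Lim_at_right_if_Cauchy)
  fix \<epsilon> :: real assume "0 < \<epsilon>"
  have "((\<lambda>t. t *\<^sub>R w) \<longlongrightarrow> 0 *\<^sub>R w) (at_right 0)"
    by (intro tendsto_intros)
  then have "((\<lambda>t. t *\<^sub>R w) \<longlongrightarrow> 0) (at_right 0)" by simp
  from eventually_second_quotient_Cauchy[OF this \<open>0 < \<epsilon>\<close>]
  show "\<forall>\<^sub>F t in at_right 0. \<forall>\<tau>\<in>{0<..t}.
      dist (second_quotient d w \<tau>) (second_quotient d w t) \<le> \<epsilon>" .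
qed

lemma second_order_dir_differentiable: "so_dir_differentiable g x"
  using dir_deriv_tendsto second_quotient_tendsto
  unfolding so_dir_differentiable_def second_quotient_def parabola_def by blast

lemma second_order_gph_regular: "so_gph_regular g x"
  unfolding so_gph_regular_def
proof (intro conjI allI impI locally_lipschitz second_order_dir_differentiable)
  fix d and w :: "real \<Rightarrow> 'a"
  assume w: "((\<lambda>t. t *\<^sub>R w t) \<longlongrightarrow> 0) (at_right 0)"
  \<comment> \<open>The Cauchy estimate for second_quotient is uniform over the directions w t, so
    letting the inner parameter tend to 0 bounds the distance of second_quotient d (w t) t
    from its limit dir_deriv2 g x d (w t).\<close>
  define r where "r t = g (parabola x d (w t) t)
      - (g x + t *\<^sub>R dir_deriv g x d + ((1/2) * t\<^sup>2) *\<^sub>R dir_deriv2 g x d (w t))" for t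
  have "((\<lambda>t. norm (r t) / t\<^sup>2) \<longlongrightarrow> 0) (at_right 0)"
  proof (rule tendstoI)
    fix \<epsilon> :: real assume "0 < \<epsilon>"
    from eventually_second_quotient_Cauchy[OF w this, of d] eventually_at_right_less[of 0]
    show "\<forall>\<^sub>F t in at_right 0. dist (norm (r t) / t\<^sup>2) 0 < \<epsilon>"
    proof eventually_elim
      case (elim t)
      then have "\<forall>\<^sub>F \<tau> in at_right 0. dist (second_quotient d (w t) t) (second_quotient d (w t) \<tau>) \<le> \<epsilon>"
        unfolding eventually_at_right_field by (auto simp: dist_commute intro!: exI[of _ t])
      then have "dist (second_quotient d (w t) t) (dir_deriv2 g x d (w t)) \<le> \<epsilon>"
        by (intro Lim_dist_ubound[OF _ second_quotient_tendsto]) simp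
      moreover have "r t = ((1/2) * t\<^sup>2) *\<^sub>R (second_quotient d (w t) t - dir_deriv2 g x d (w t))"
        using elim unfolding r_def second_quotient_def by (simp add: scaleR_diff_right algebra_simps)
      then have "norm (r t) / t\<^sup>2 = dist (second_quotient d (w t) t) (dir_deriv2 g x d (w t)) / 2"
        using elim by (simp add: dist_norm)
      ultimately have "norm (r t) / t\<^sup>2 < \<epsilon>" using \<open>0 < \<epsilon>\<close> by linarith
      then show ?case by simp
    qed
  qed
  moreover have "g (x + t *\<^sub>R d + ((1/2) * t\<^sup>2) *\<^sub>R w t) =
      g x + t *\<^sub>R dir_deriv g x d + ((1/2) * t\<^sup>2) *\<^sub>R dir_deriv2 g x d (w t) + r t" for t
    unfolding r_def parabola_def by simp
  ultimately show "\<exists>r. ((\<lambda>t. norm (r t) / t\<^sup>2) \<longlongrightarrow> 0) (at_right 0) \<and>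
      (\<exists>\<delta>>0. \<forall>t. 0 \<le> t \<and> t < \<delta> \<longrightarrow>
        g (x + t *\<^sub>R d + ((1/2) * t\<^sup>2) *\<^sub>R w t) =
          g x + t *\<^sub>R dir_deriv g x d + ((1/2) * t\<^sup>2) *\<^sub>R dir_deriv2 g x d (w t) + r t)"
    by (intro exI[of _ r] conjI exI[of _ 1]) auto
qed

end

lemma C2_selection_ball_if_local_pieces:
  fixes g :: "'a::real_normed_vector \<Rightarrow> 'b::banach"
    and D1 :: "('a \<Rightarrow> 'b) \<Rightarrow> 'a \<Rightarrow> ('a \<Rightarrow>\<^sub>L 'b)"
    and D2 :: "('a \<Rightarrow> 'b) \<Rightarrow> 'a \<Rightarrow> ('a \<Rightarrow>\<^sub>L ('a \<Rightarrow>\<^sub>L 'b))"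
  assumes "open V" and "x \<in> V" and "continuous_on V g" and "finite F"
    and selection: "\<And>y. y \<in> V \<Longrightarrow> \<exists>f\<in>F. g y = f y"
    and D1: "\<And>f y. f \<in> F \<Longrightarrow> y \<in> V \<Longrightarrow> (f has_derivative D1 f y) (at y)"
    and D2: "\<And>f y. f \<in> F \<Longrightarrow> y \<in> V \<Longrightarrow> (D1 f has_derivative D2 f y) (at y)"
    and D2_continuous: "\<And>f. f \<in> F \<Longrightarrow> continuous_on V (D2 f)"
  obtains \<rho> K M where "C2_selection_ball g x \<rho> {f \<in> F. f x = g x} D1 D2 K M"
proof -
  have nhds: "(h \<longlongrightarrow> h x) (nhds x)" if "isCont h x" for h :: "'a \<Rightarrow> 'c::topological_space"
    using that by (simp add: isCont_def tendsto_at_iff_tendsto_nhds)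
  have cont_at: "isCont h x" if "continuous_on V h" for h :: "'a \<Rightarrow> 'c::topological_space"
    using that \<open>open V\<close> \<open>x \<in> V\<close> continuous_on_eq_continuous_at by blast
  have "\<forall>f\<in>F. \<forall>\<^sub>F y in nhds x. y \<in> V \<and> (f x \<noteq> g x \<longrightarrow> f y \<noteq> g y) \<and>
      dist (D1 f y) (D1 f x) < 1 \<and> dist (D2 f y) (D2 f x) < 1"
  proof
    fix f assume f: "f \<in> F"
    have "\<forall>\<^sub>F y in nhds x. y \<in> V" using \<open>open V\<close> \<open>x \<in> V\<close> by (rule eventually_nhds_in_open)
    moreover have "\<forall>\<^sub>F y in nhds x. f x \<noteq> g x \<longrightarrow> f y \<noteq> g y"
    proof (cases "f x = g x")
      case False
      have "((\<lambda>y. f y - g y) \<longlongrightarrow> f x - g x) (nhds x)"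
        using has_derivative_continuous[OF D1[OF f \<open>x \<in> V\<close>]] cont_at[OF \<open>continuous_on V g\<close>]
        by (intro tendsto_diff nhds)
      then have "\<forall>\<^sub>F y in nhds x. f y - g y \<noteq> 0"
        by (rule tendsto_imp_eventually_ne) (use False in simp)
      then show ?thesis by eventually_elim simp
    qed simp
    moreover have "\<forall>\<^sub>F y in nhds x. dist (D1 f y) (D1 f x) < 1"
      using nhds[OF has_derivative_continuous[OF D2[OF f \<open>x \<in> V\<close>]]] by (rule tendstoD) simp
    moreover have "\<forall>\<^sub>F y in nhds x. dist (D2 f y) (D2 f x) < 1"
      using nhds[OF cont_at[OF D2_continuous[OF f]]] by (rule tendstoD) simp
    ultimately show "\<forall>\<^sub>F y in nhds x. y \<in> V \<and> (f x \<noteq> g x \<longrightarrow> f y \<noteq> g y) \<and>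
        dist (D1 f y) (D1 f x) < 1 \<and> dist (D2 f y) (D2 f x) < 1"
      by eventually_elim blast
  qed
  then have "\<forall>\<^sub>F y in nhds x. \<forall>f\<in>F. y \<in> V \<and> (f x \<noteq> g x \<longrightarrow> f y \<noteq> g y) \<and>
      dist (D1 f y) (D1 f x) < 1 \<and> dist (D2 f y) (D2 f x) < 1"
    by (rule eventually_ball_finite[OF \<open>finite F\<close>])
  then obtain \<rho> where "0 < \<rho>" and near: "\<And>y. y \<in> ball x \<rho> \<Longrightarrow> \<forall>f\<in>F. y \<in> V \<and>
      (f x \<noteq> g x \<longrightarrow> f y \<noteq> g y) \<and> dist (D1 f y) (D1 f x) < 1 \<and> dist (D2 f y) (D2 f x) < 1"
    unfolding eventually_nhds_metric by (auto simp: dist_commute)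
  have "ball x \<rho> \<subseteq> V" using near \<open>finite F\<close> selection[OF \<open>x \<in> V\<close>] by fastforce
  have bound: "norm (D f y) \<le> (\<Sum>f\<in>F. norm (D f x)) + 1"
    if "f \<in> F" "dist (D f y) (D f x) < 1" for D :: "('a \<Rightarrow> 'b) \<Rightarrow> 'a \<Rightarrow> 'c::real_normed_vector" and f y
  proof -
    have "norm (D f x) \<le> (\<Sum>f\<in>F. norm (D f x))"
      using \<open>finite F\<close> \<open>f \<in> F\<close> by (intro member_le_sum) auto
    then show ?thesis
      using that(2) norm_triangle_sub[of "D f y" "D f x"] by (simp add: dist_norm)
  qed
  show thesis
  proof (rule that, unfold_locales)
    show "finite {f \<in> F. f x = g x}" using \<open>finite F\<close> by simp
    show "0 < \<rho>" by fact
    show "continuous_on (ball x \<rho>) g"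
      using \<open>continuous_on V g\<close> \<open>ball x \<rho> \<subseteq> V\<close> by (rule continuous_on_subset)
    show "\<exists>f\<in>{f \<in> F. f x = g x}. g y = f y" if "y \<in> ball x \<rho>" for y
      using selection[of y] near[OF that] \<open>ball x \<rho> \<subseteq> V\<close> that by fastforce
    show "f x = g x" if "f \<in> {f \<in> F. f x = g x}" for f using that by simp
    fix f assume f: "f \<in> {f \<in> F. f x = g x}"
    then have "f \<in> F" by simp
    show "continuous_on (ball x \<rho>) (D2 f)"
      using D2_continuous[OF \<open>f \<in> F\<close>] \<open>ball x \<rho> \<subseteq> V\<close> by (rule continuous_on_subset)
    fix y assume y: "y \<in> ball x \<rho>"
    then have "y \<in> V" using \<open>ball x \<rho> \<subseteq> V\<close> by blast
    show "(f has_derivative blinfun_apply (D1 f y)) (at y)" by (rule D1[OF \<open>f \<in> F\<close> \<open>y \<in> V\<close>])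
    show "(D1 f has_derivative blinfun_apply (D2 f y)) (at y)" by (rule D2[OF \<open>f \<in> F\<close> \<open>y \<in> V\<close>])
    show "norm (D1 f y) \<le> (\<Sum>f\<in>F. norm (D1 f x)) + 1"
      using near[OF y] \<open>f \<in> F\<close> by (intro bound) auto
    show "norm (D2 f y) \<le> (\<Sum>f\<in>F. norm (D2 f x)) + 1"
      using near[OF y] \<open>f \<in> F\<close> by (intro bound) auto
  qed
qed

lemma PC2_on_imp_C2_selection_ball:
  fixes g :: "'a::euclidean_space \<Rightarrow> 'b::euclidean_space"
  assumes "PC2_on U g" and "x \<in> U"
  obtains \<rho> F D1 D2 K M where "C2_selection_ball g x \<rho> F D1 D2 K M"
proof -
  obtain V where "open V" "x \<in> V" "cont_selection_C2 V g"
    using assms unfolding PC2_on_def by blast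
  then obtain F where V: "open V" "x \<in> V" "continuous_on V g" "finite F"
    "\<And>y. y \<in> V \<Longrightarrow> \<exists>f\<in>F. g y = f y" and C2: "\<And>f. f \<in> F \<Longrightarrow> C2_on V f"
    unfolding cont_selection_C2_def by blast
  have "\<forall>f\<in>F. \<exists>D1 :: 'a \<Rightarrow> ('a \<Rightarrow>\<^sub>L 'b). \<exists>D2 :: 'a \<Rightarrow> ('a \<Rightarrow>\<^sub>L ('a \<Rightarrow>\<^sub>L 'b)).
      (\<forall>y\<in>V. (f has_derivative blinfun_apply (D1 y)) (at y)) \<and>
      (\<forall>y\<in>V. (D1 has_derivative blinfun_apply (D2 y)) (at y)) \<and> continuous_on V D2"
    using C2 unfolding C2_on_def by blast
  from bchoice[OF this] obtain D1 where "\<forall>f\<in>F. \<exists>D2.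
      (\<forall>y\<in>V. (f has_derivative blinfun_apply (D1 f y)) (at y)) \<and>
      (\<forall>y\<in>V. (D1 f has_derivative blinfun_apply (D2 y)) (at y)) \<and> continuous_on V D2" ..
  from bchoice[OF this] obtain D2 where D: "\<forall>f\<in>F.
      (\<forall>y\<in>V. (f has_derivative blinfun_apply (D1 f y)) (at y)) \<and>
      (\<forall>y\<in>V. (D1 f has_derivative blinfun_apply (D2 f y)) (at y)) \<and> continuous_on V (D2 f)" ..
  show thesis
    by (rule C2_selection_ball_if_local_pieces[OF V]) (use D that in blast)+
qed

theorem proposition2p2:
  fixes U :: "'a::euclidean_space set" and g :: "'a \<Rightarrow> 'b::euclidean_space"
  assumes "open U" and "PC2_on U g"
  shows "\<forall>x\<in>U. so_dir_differentiable g x \<and> so_gph_regular g x"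
proof
  fix x assume "x \<in> U"
  then obtain \<rho> F D1 D2 K M where "C2_selection_ball g x \<rho> F D1 D2 K M"
    using PC2_on_imp_C2_selection_ball[OF assms(2)] by blast
  then show "so_dir_differentiable g x \<and> so_gph_regular g x"
    using C2_selection_ball.second_order_dir_differentiable
      C2_selection_ball.second_order_gph_regular by blast
qed

end
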